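(* Let $(\boldsymbol{X},S,L,A,R)$ be a random vector with covariates $\boldsymbol{X}\in\mathcal{X}\subseteq\mathbb{R}^p$, binary sensitive attribute $S\in\{0,1\}$, categorical "legitimate" feature $L$ taking values in a finite set $\mathcal{L}$, treatment $A\in\{1,-1\}$ and outcome $R$, and write $\boldsymbol{Z}=(\boldsymbol{X},S,L)$. Assume $P(S=s\mid L=l)>0$ for all $s\in\{0,1\}$, $l\in\mathcal{L}$, and let $\pi(s\mid l)=P(S=s\mid L=l)$, $\psi_l(S)=\frac{I(S=1)}{\pi(1\mid l)}-\frac{I(S=0)}{\pi(0\mid l)}$, and $\delta_R(\boldsymbol{Z})=E[R\mid\boldsymbol{Z},A=1]-E[R\mid\boldsymbol{Z},A=-1]$. Consider the problem of maximizing the value $\mathcal{V}(\mathcal{D})=E[R(\mathcal{D})]$ over individualized decision rules $\mathcal{D}:\mathcal{Z}\to\{1,-1\}$ subject to the conditional demographic parity constraint $$P[\mathcal{D}(\boldsymbol{Z})=a\mid S=s,L=l]=P[\mathcal{D}(\boldsymbol{Z})=a\mid S=s',L=l]\quad\text{for all } s,s'\in\{0,1\},\ l\in\mathcal{L},\ a\in\{-1,1\}.$$ For each $l\in\mathcal{L}$ let $f_l^*$ be a solution of $$\max_f E\big[I(f(\boldsymbol{Z})>0)\delta_R(\boldsymbol{Z})\big]\quad\text{subject to}\quad E\big[I(f(\boldsymbol{Z})>0)I(L=l)\psi_l(S)\big]=0,$$ and let $\mathcal{D}_l^*=2I(f_l^*(\boldsymbol{Z})>0)-1$. Then the constrained problem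 above has the solution $\mathcal{D}^*_{cdp}(\boldsymbol{Z})=\sum_{l\in\mathcal{L}}\mathcal{D}_l^*(\boldsymbol{Z})I(L=l)$.
   Context: Potential outcomes $R(1),R(-1)$ under treatments $1,-1$; for a rule $\mathcal{D}$, $R(\mathcal{D})=R(1)I(\mathcal{D}(\boldsymbol{Z})=1)+R(-1)I(\mathcal{D}(\boldsymbol{Z})=-1)$. Standing assumptions: (i) stable unit treatment value: $R=R(a)$ when $A=a$; (ii) no unmeasured confounders: $\{R(-1),R(1)\}$ is independent of $A$ given $\boldsymbol{Z}$. Decision rules are parametrized as $\mathcal{D}(\boldsymbol{Z})=2I(f(\boldsymbol{Z})>0)-1$ for a real-valued decision function $f$. *)

theory Defs
  imports "HOL-Probability.Probability"
begin

definition cexp :: "'a measure \<Rightarrow> ('a \<Rightarrow> 'z) \<Rightarrow> 'z measure \<Rightarrow> ('a \<Rightarrow> real) \<Rightarrow> 'a \<Rightarrow> real" where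
  "cexp M Z N g = real_cond_exp M (vimage_algebra (space M) Z N) g"

definition cprob :: "'a measure \<Rightarrow> 'a set \<Rightarrow> 'a set \<Rightarrow> real" where
  "cprob M E C = measure M (E \<inter> C) / measure M C"

definition cond_indep_given ::
  "'a measure \<Rightarrow> ('a \<Rightarrow> 'z) \<Rightarrow> 'z measure \<Rightarrow> ('a \<Rightarrow> 'y) \<Rightarrow> 'y measure \<Rightarrow> ('a \<Rightarrow> 'b) \<Rightarrow> 'b measure \<Rightarrow> bool" where
  "cond_indep_given M Z N Y NY A NA \<longleftrightarrow>
     (\<forall>g h. g \<in> borel_measurable NY \<longrightarrow> h \<in> borel_measurable NA \<longrightarrow>
        (\<exists>B. \<forall>y. \<bar>g y\<bar> \<le> B) \<longrightarrow> (\<exists>B. \<forall>b. \<bar>h b\<bar> \<le> B) \<longrightarrow>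
        (AE \<omega> in M. cexp M Z N (\<lambda>\<omega>. g (Y \<omega>) * h (A \<omega>)) \<omega>
                    = cexp M Z N (\<lambda>\<omega>. g (Y \<omega>)) \<omega> * cexp M Z N (\<lambda>\<omega>. h (A \<omega>)) \<omega>))"

text \<open>delta_R(Z) = E[R | Z, A = 1] - E[R | Z, A = -1], with
  E[R | Z, A = a] = E[R I(A = a) | Z] / P(A = a | Z).\<close>
definition deltaR :: "'a measure \<Rightarrow> ('a \<Rightarrow> 'z) \<Rightarrow> 'z measure \<Rightarrow> ('a \<Rightarrow> int) \<Rightarrow> ('a \<Rightarrow> real) \<Rightarrow> 'a \<Rightarrow> real" where
  "deltaR M Z N A R \<omega> =
     cexp M Z N (\<lambda>\<omega>. R \<omega> * (if A \<omega> = 1 then 1 else 0)) \<omega> / cexp M Z N (\<lambda>\<omega>. if A \<omega> = 1 then 1 else 0) \<omega>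
   - cexp M Z N (\<lambda>\<omega>. R \<omega> * (if A \<omega> = -1 then 1 else 0)) \<omega> / cexp M Z N (\<lambda>\<omega>. if A \<omega> = -1 then 1 else 0) \<omega>"

definition pi_SL :: "'a measure \<Rightarrow> ('a \<Rightarrow> nat) \<Rightarrow> ('a \<Rightarrow> 'l) \<Rightarrow> nat \<Rightarrow> 'l \<Rightarrow> real" where
  "pi_SL M S L s l = cprob M {\<omega> \<in> space M. S \<omega> = s} {\<omega> \<in> space M. L \<omega> = l}"

definition psi :: "'a measure \<Rightarrow> ('a \<Rightarrow> nat) \<Rightarrow> ('a \<Rightarrow> 'l) \<Rightarrow> 'l \<Rightarrow> 'a \<Rightarrow> real" where
  "psi M S L l \<omega> = (if S \<omega> = 1 then 1 / pi_SL M S L 1 l else 0) - (if S \<omega> = 0 then 1 / pi_SL M S L 0 l else 0)"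

text \<open>Value V(D) = E[R(D)] with potential outcomes R(1) = R1, R(-1) = Rm1.\<close>
definition value_fun :: "'a measure \<Rightarrow> ('a \<Rightarrow> 'z) \<Rightarrow> ('a \<Rightarrow> real) \<Rightarrow> ('a \<Rightarrow> real) \<Rightarrow> ('z \<Rightarrow> int) \<Rightarrow> real" where
  "value_fun M Z R1 Rm1 D =
     (\<integral>\<omega>. R1 \<omega> * (if D (Z \<omega>) = 1 then 1 else 0) + Rm1 \<omega> * (if D (Z \<omega>) = -1 then 1 else 0) \<partial>M)"

definition cdp :: "'a measure \<Rightarrow> ('a \<Rightarrow> 'z) \<Rightarrow> ('a \<Rightarrow> nat) \<Rightarrow> ('a \<Rightarrow> 'l) \<Rightarrow> 'l set \<Rightarrow> ('z \<Rightarrow> int) \<Rightarrow> bool" where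
  "cdp M Z S L Ls D \<longleftrightarrow>
     (\<forall>s\<in>{0,1}. \<forall>s'\<in>{0,1}. \<forall>l\<in>Ls. \<forall>a\<in>{-1,1}.
        cprob M {\<omega> \<in> space M. D (Z \<omega>) = a} {\<omega> \<in> space M. S \<omega> = s \<and> L \<omega> = l}
      = cprob M {\<omega> \<in> space M. D (Z \<omega>) = a} {\<omega> \<in> space M. S \<omega> = s' \<and> L \<omega> = l})"

definition obj_l :: "'a measure \<Rightarrow> ('a \<Rightarrow> 'z) \<Rightarrow> ('a \<Rightarrow> real) \<Rightarrow> ('z \<Rightarrow> real) \<Rightarrow> real" where
  "obj_l M Z dR f = (\<integral>\<omega>. (if f (Z \<omega>) > 0 then 1 else 0) * dR \<omega> \<partial>M)"

definition constr_l :: "'a measure \<Rightarrow> ('a \<Rightarrow> 'z) \<Rightarrow> ('a \<Rightarrow> nat) \<Rightarrow> ('a \<Rightarrow> 'l) \<Rightarrow> 'l \<Rightarrow> ('z \<Rightarrow> real) \<Rightarrow> bool" where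
  "constr_l M Z S L l f \<longleftrightarrow>
     (\<integral>\<omega>. (if f (Z \<omega>) > 0 then 1 else 0) * (if L \<omega> = l then 1 else 0) * psi M S L l \<omega> \<partial>M) = 0"

end

theory Submission
  imports Defs
begin

text \<open>
  By consistency and no unmeasured confounders, E[R I(A = a) | Z] = E[R(a) | Z] P(A = a | Z);
  under positivity this identifies delta_R(Z) as E[R(1) - R(-1) | Z], so that
  V(D) = E[R(-1)] + E[I(D(Z) = 1) delta_R(Z)] for every rule D.
  On the other hand E[I(f(Z) > 0) I(L = l) psi_l(S)] is P(L = l) times the difference of the
  probabilities of f(Z) > 0 given (S, L) = (1, l) and given (S, L) = (0, l), so the l-th
  constraint says exactly that I(f(Z) > 0) satisfies demographic parity within the stratum L = l.
  Value and constraints thus split over the strata. For a CDP rule D, the function equal to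
  I(D = 1) on the stratum l and to f_l^* elsewhere is feasible for the l-th problem; comparing
  its objective with that of f_l^* shows that D^*_cdp does at least as well as D on the stratum l.
\<close>

definition trunc_at :: "nat \<Rightarrow> real \<Rightarrow> real" where
  "trunc_at n y = max (- real n) (min (real n) y)"

lemma abs_trunc_at_le: "\<bar>trunc_at n y\<bar> \<le> \<bar>y\<bar>" "\<bar>trunc_at n y\<bar> \<le> real n"
  unfolding trunc_at_def by auto

lemma trunc_at_tendsto: "(\<lambda>n. trunc_at n y) \<longlonglongrightarrow> y"
proof (rule tendsto_eventually)
  obtain N :: nat where "\<bar>y\<bar> \<le> real N" using real_arch_simple by blast
  then show "\<forall>\<^sub>F n in sequentially. trunc_at n y = y"
    unfolding eventually_sequentially trunc_at_def by (intro exI[of _ N]) auto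
qed

lemma borel_measurable_trunc_at [measurable]: "trunc_at n \<in> borel_measurable borel"
  unfolding trunc_at_def by measurable

lemma integrable_bounded_mult:
  fixes f \<phi> :: "'a \<Rightarrow> real"
  assumes f: "integrable M f" and [measurable]: "\<phi> \<in> borel_measurable M"
    and \<phi>_bound: "AE x in M. \<bar>\<phi> x\<bar> \<le> 1"
  shows "integrable M (\<lambda>x. \<phi> x * f x)"
proof (rule Bochner_Integration.integrable_bound[OF f])
  show "AE x in M. norm (\<phi> x * f x) \<le> norm (f x)"
    using \<phi>_bound by eventually_elim (auto simp: abs_mult intro!: mult_left_le_one_le)
qed (use f in measurable)

lemma integrable_trunc_at: "integrable M Y \<Longrightarrow> integrable M (\<lambda>x. trunc_at n (Y x))"
  by (rule Bochner_Integration.integrable_bound) (auto simp: abs_trunc_at_le(1))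

lemma integral_mult_trunc_at_tendsto:
  fixes Y w :: "'a \<Rightarrow> real"
  assumes Y: "integrable M Y" and [measurable]: "w \<in> borel_measurable M"
    and w_bound: "AE x in M. \<bar>w x\<bar> \<le> 1"
  shows "(\<lambda>n. \<integral>x. w x * trunc_at n (Y x) \<partial>M) \<longlonglongrightarrow> (\<integral>x. w x * Y x \<partial>M)"
proof (rule integral_dominated_convergence[where w = "\<lambda>x. \<bar>Y x\<bar>"])
  show "AE x in M. norm (w x * trunc_at n (Y x)) \<le> \<bar>Y x\<bar>" for n
    using w_bound by eventually_elim
      (auto simp: abs_mult intro: order_trans[OF mult_left_le_one_le] abs_trunc_at_le(1))
qed (use Y in \<open>auto intro!: tendsto_mult_left trunc_at_tendsto\<close>)

text \<open>\<open>cond_indep_given\<close> only constrains bounded functions of the outcomes; truncation extends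
  the factorisation of conditional expectations to integrable outcomes.\<close>

lemma (in finite_measure_subalgebra) real_cond_exp_mult_of_truncations:
  fixes Y I :: "'a \<Rightarrow> real"
  assumes Y: "integrable M Y" and [measurable]: "I \<in> borel_measurable M"
    and I_bound: "\<And>x. x \<in> space M \<Longrightarrow> \<bar>I x\<bar> \<le> 1"
    and trunc_mult: "\<And>n. AE x in M. real_cond_exp M F (\<lambda>x. trunc_at n (Y x) * I x) x
                        = real_cond_exp M F (\<lambda>x. trunc_at n (Y x)) x * real_cond_exp M F I x"
  shows "AE x in M. real_cond_exp M F (\<lambda>x. Y x * I x) x = real_cond_exp M F Y x * real_cond_exp M F I x"
proof (rule real_cond_exp_charact)
  let ?E = "real_cond_exp M F"
  have [measurable]: "Y \<in> borel_measurable M" using Y by auto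
  have I_int: "integrable M I" by (rule integrable_const_bound[of _ 1]) (use I_bound in auto)
  have "AE x in M. ?E I x \<ge> -1" "AE x in M. ?E I x \<le> 1"
    using I_bound by (auto intro!: real_cond_exp_ge_c real_cond_exp_le_c I_int simp: abs_le_iff)
  then have E_bound: "AE x in M. \<bar>?E I x\<bar> \<le> 1" by eventually_elim simp
  show "integrable M (\<lambda>x. ?E Y x * ?E I x)"
    using E_bound integrable_bounded_mult[OF real_cond_exp_int(1)[OF Y]] by (simp add: mult.commute)
  fix B assume [measurable]: "B \<in> sets F"
  then have [measurable]: "B \<in> sets M" using subalg by (meson subalgebra_def subsetD)
  have B_bound: "AE x in M. \<bar>indicator B x * w x\<bar> \<le> 1" if "AE x in M. \<bar>w x\<bar> \<le> 1" for w :: "'a \<Rightarrow> real"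
    using that by eventually_elim (auto simp: indicator_def)
  have eq_n: "(\<integral>x. (indicator B x * I x) * trunc_at n (Y x) \<partial>M)
            = (\<integral>x. (indicator B x * ?E I x) * trunc_at n (Y x) \<partial>M)" for n
  proof -
    have int_n: "integrable M (\<lambda>x. w x * trunc_at n (Y x))"
      if "w \<in> borel_measurable M" "AE x in M. \<bar>w x\<bar> \<le> 1" for w
      using that by (intro integrable_bounded_mult integrable_trunc_at[OF Y])
    have "(\<integral>x. (indicator B x * I x) * trunc_at n (Y x) \<partial>M)
        = (\<integral>x. indicator B x * ?E (\<lambda>x. trunc_at n (Y x) * I x) x \<partial>M)"
      using int_n[of "\<lambda>x. indicator B x * I x"] I_bound B_bound
      by (subst real_cond_exp_intg(2)) (auto simp: mult_ac)
    also have "\<dots> = (\<integral>x. (indicator B x * ?E I x) * ?E (\<lambda>x. trunc_at n (Y x)) x \<partial>M)"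
      by (rule integral_cong_AE) (use trunc_mult[of n] in auto)
    also have "\<dots> = (\<integral>x. (indicator B x * ?E I x) * trunc_at n (Y x) \<partial>M)"
      using int_n[of "\<lambda>x. indicator B x * ?E I x"] B_bound[OF E_bound]
      by (subst real_cond_exp_intg(2)) auto
    finally show ?thesis .
  qed
  have "(\<integral>x. (indicator B x * I x) * Y x \<partial>M) = (\<integral>x. (indicator B x * ?E I x) * Y x \<partial>M)"
    using LIMSEQ_unique[OF integral_mult_trunc_at_tendsto[OF Y, of "\<lambda>x. indicator B x * I x", unfolded eq_n]
        integral_mult_trunc_at_tendsto[OF Y, of "\<lambda>x. indicator B x * ?E I x"]]
      B_bound[OF E_bound] B_bound I_bound by auto
  also have "\<dots> = (\<integral>x. (indicator B x * ?E I x) * ?E Y x \<partial>M)"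
    using B_bound[OF E_bound] Y by (intro real_cond_exp_intg(2)[symmetric] integrable_bounded_mult) auto
  finally show "(\<integral>x\<in>B. Y x * I x \<partial>M) = (\<integral>x\<in>B. ?E Y x * ?E I x \<partial>M)"
    by (simp add: set_lebesgue_integral_def mult_ac)
qed (use I_bound integrable_bounded_mult[OF Y] in \<open>auto simp: mult.commute\<close>)

lemma finite_measure_subalgebra_vimage_algebra:
  assumes "finite_measure M" and "Z \<in> measurable M N"
  shows "finite_measure_subalgebra M (vimage_algebra (space M) Z N)"
  using assms sets_vimage_algebra2[of Z "space M" N]
  by (auto simp: finite_measure_subalgebra_def finite_measure_subalgebra_axioms_def subalgebra_def
      measurable_def)

lemma cexp_mult_of_cond_indep:
  fixes g :: "'y \<Rightarrow> real" and h :: "'b \<Rightarrow> real"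
  assumes M: "finite_measure M" and Z[measurable]: "Z \<in> measurable M N"
    and indep: "cond_indep_given M Z N Y NY A NA"
    and [measurable]: "Y \<in> measurable M NY" "A \<in> measurable M NA"
    and [measurable]: "g \<in> borel_measurable NY" and g_int: "integrable M (\<lambda>\<omega>. g (Y \<omega>))"
    and [measurable]: "h \<in> borel_measurable NA" and h_bound: "\<And>b. \<bar>h b\<bar> \<le> 1"
  shows "AE \<omega> in M. cexp M Z N (\<lambda>\<omega>. g (Y \<omega>) * h (A \<omega>)) \<omega>
                   = cexp M Z N (\<lambda>\<omega>. g (Y \<omega>)) \<omega> * cexp M Z N (\<lambda>\<omega>. h (A \<omega>)) \<omega>"
proof -
  interpret finite_measure_subalgebra M "vimage_algebra (space M) Z N"
    by (rule finite_measure_subalgebra_vimage_algebra[OF M Z])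
  have trunc_mult: "AE \<omega> in M. cexp M Z N (\<lambda>\<omega>. trunc_at n (g (Y \<omega>)) * h (A \<omega>)) \<omega>
         = cexp M Z N (\<lambda>\<omega>. trunc_at n (g (Y \<omega>))) \<omega> * cexp M Z N (\<lambda>\<omega>. h (A \<omega>)) \<omega>" for n
  proof (rule indep[unfolded cond_indep_given_def, rule_format, of "\<lambda>y. trunc_at n (g y)" h])
    show "\<exists>B. \<forall>y. \<bar>trunc_at n (g y)\<bar> \<le> B" using abs_trunc_at_le(2) by blast
    show "\<exists>B. \<forall>b. \<bar>h b\<bar> \<le> B" using h_bound by blast
  qed measurable
  show ?thesis
    using real_cond_exp_mult_of_truncations[OF g_int _ _ trunc_mult[unfolded cexp_def]] h_bound
    unfolding cexp_def by simp
qed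

locale causal_model = prob_space M
  for M :: "'a measure" and Z :: "'a \<Rightarrow> 'z" and N :: "'z measure"
    and A :: "'a \<Rightarrow> int" and R R1 Rm1 :: "'a \<Rightarrow> real" +
  assumes Z_measurable[measurable]: "Z \<in> measurable M N"
    and A_measurable[measurable]: "A \<in> measurable M (count_space UNIV)"
    and A_values: "\<forall>\<omega>\<in>space M. A \<omega> \<in> {1, -1}"
    and integrable_R1: "integrable M R1" and integrable_Rm1: "integrable M Rm1"
    and consistency: "\<forall>\<omega>\<in>space M. R \<omega> = (if A \<omega> = 1 then R1 \<omega> else Rm1 \<omega>)"
    and no_unmeasured_confounders:
      "cond_indep_given M Z N (\<lambda>\<omega>. (Rm1 \<omega>, R1 \<omega>)) borel A (count_space UNIV)"
    and positivity: "AE \<omega> in M. 0 < cexp M Z N (\<lambda>\<omega>. if A \<omega> = 1 then 1 else 0) \<omega>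
                              \<and> cexp M Z N (\<lambda>\<omega>. if A \<omega> = 1 then 1 else 0) \<omega> < 1"
begin

abbreviation F where "F \<equiv> vimage_algebra (space M) Z N"

sublocale finite_measure_subalgebra M F
  by (rule finite_measure_subalgebra_vimage_algebra[OF finite_measure_axioms Z_measurable])

lemma cexp_eq_real_cond_exp: "cexp M Z N = real_cond_exp M F"
  by (simp add: cexp_def fun_eq_iff)

lemma Z_measurable_F[measurable]: "Z \<in> measurable F N"
  using Z_measurable by (intro measurable_vimage_algebra1) (auto simp: measurable_def)

lemma potential_outcomes_measurable[measurable]:
  "R1 \<in> borel_measurable M" "Rm1 \<in> borel_measurable M"
  using integrable_R1 integrable_Rm1 by auto

lemma R_measurable[measurable]: "R \<in> borel_measurable M"
  using consistency by (subst measurable_cong[where g = "\<lambda>\<omega>. if A \<omega> = 1 then R1 \<omega> else Rm1 \<omega>"]) auto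

lemma cexp_mult_treatment_indicator:
  "AE \<omega> in M. cexp M Z N (\<lambda>\<omega>. R \<omega> * (if A \<omega> = a then 1 else 0)) \<omega>
              = cexp M Z N (if a = 1 then R1 else Rm1) \<omega> * cexp M Z N (\<lambda>\<omega>. if A \<omega> = a then 1 else 0) \<omega>"
  if "a \<in> {1, -1}" for a
proof -
  define g :: "real \<times> real \<Rightarrow> real" where "g = (if a = 1 then snd else fst)"
  have g_measurable: "g \<in> borel_measurable borel"
    unfolding g_def borel_prod[symmetric] by simp
  have "AE \<omega> in M. cexp M Z N (\<lambda>\<omega>. g (Rm1 \<omega>, R1 \<omega>) * (if A \<omega> = a then 1 else 0)) \<omega>
      = cexp M Z N (\<lambda>\<omega>. g (Rm1 \<omega>, R1 \<omega>)) \<omega> * cexp M Z N (\<lambda>\<omega>. if A \<omega> = a then 1 else 0) \<omega>"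
    by (rule cexp_mult_of_cond_indep[OF finite_measure_axioms Z_measurable no_unmeasured_confounders])
       (use g_measurable integrable_R1 integrable_Rm1 in \<open>auto simp: g_def\<close>)
  moreover have "AE \<omega> in M. cexp M Z N (\<lambda>\<omega>. R \<omega> * (if A \<omega> = a then 1 else 0)) \<omega>
      = cexp M Z N (\<lambda>\<omega>. g (Rm1 \<omega>, R1 \<omega>) * (if A \<omega> = a then 1 else 0)) \<omega>"
    unfolding cexp_eq_real_cond_exp using consistency A_values that
    by (intro real_cond_exp_cong AE_I2) (auto simp: g_def)
  ultimately show ?thesis
    by eventually_elim (simp add: g_def)
qed

lemma cexp_untreated_indicator:
  "AE \<omega> in M. cexp M Z N (\<lambda>\<omega>. if A \<omega> = -1 then 1 else 0) \<omega>
              = 1 - cexp M Z N (\<lambda>\<omega>. if A \<omega> = 1 then 1 else 0) \<omega>"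
proof -
  have "AE \<omega> in M. real_cond_exp M F (\<lambda>\<omega>. if A \<omega> = -1 then 1 else 0) \<omega>
      = real_cond_exp M F (\<lambda>\<omega>. 1 - (if A \<omega> = 1 then 1 else 0)) \<omega>"
    using A_values by (intro real_cond_exp_cong AE_I2) auto
  moreover have "AE \<omega> in M. real_cond_exp M F (\<lambda>\<omega>. 1 - (if A \<omega> = 1 then 1 else 0)) \<omega>
      = real_cond_exp M F (\<lambda>\<omega>. 1) \<omega> - real_cond_exp M F (\<lambda>\<omega>. if A \<omega> = 1 then 1 else 0) \<omega>"
    by (intro real_cond_exp_diff integrable_const_bound[of _ 1]) auto
  moreover have "AE \<omega> in M. real_cond_exp M F (\<lambda>\<omega>. 1) \<omega> = 1"
    by (intro real_cond_exp_F_meas) auto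
  ultimately show ?thesis
    unfolding cexp_eq_real_cond_exp by eventually_elim simp
qed

lemma deltaR_ae_eq: "AE \<omega> in M. deltaR M Z N A R \<omega> = cexp M Z N R1 \<omega> - cexp M Z N Rm1 \<omega>"
  using cexp_mult_treatment_indicator[of 1, simplified] cexp_mult_treatment_indicator[of "-1", simplified]
    cexp_untreated_indicator positivity
  by eventually_elim (simp add: deltaR_def)

lemma deltaR_measurable[measurable]: "deltaR M Z N A R \<in> borel_measurable M"
  unfolding deltaR_def cexp_eq_real_cond_exp by measurable

lemma integrable_deltaR: "integrable M (deltaR M Z N A R)"
proof -
  have "integrable M (\<lambda>\<omega>. cexp M Z N R1 \<omega> - cexp M Z N Rm1 \<omega>)"
    unfolding cexp_eq_real_cond_exp using integrable_R1 integrable_Rm1 by auto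
  then show ?thesis
    using integrable_cong_AE[OF _ _ deltaR_ae_eq] unfolding cexp_eq_real_cond_exp by simp
qed

lemma integral_mult_deltaR:
  assumes [measurable]: "\<phi> \<in> borel_measurable F" and \<phi>_bound: "\<And>\<omega>. \<omega> \<in> space M \<Longrightarrow> \<bar>\<phi> \<omega>\<bar> \<le> 1"
  shows "(\<integral>\<omega>. \<phi> \<omega> * deltaR M Z N A R \<omega> \<partial>M) = (\<integral>\<omega>. \<phi> \<omega> * R1 \<omega> \<partial>M) - (\<integral>\<omega>. \<phi> \<omega> * Rm1 \<omega> \<partial>M)"
proof -
  have [measurable]: "\<phi> \<in> borel_measurable M" by (rule measurable_from_subalg[OF subalg]) simp
  have \<phi>_int: "integrable M (\<lambda>\<omega>. \<phi> \<omega> * Y \<omega>)" if "integrable M Y" for Y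
    by (rule integrable_bounded_mult[OF that]) (use \<phi>_bound in auto)
  have "(\<integral>\<omega>. \<phi> \<omega> * deltaR M Z N A R \<omega> \<partial>M)
      = (\<integral>\<omega>. \<phi> \<omega> * real_cond_exp M F R1 \<omega> - \<phi> \<omega> * real_cond_exp M F Rm1 \<omega> \<partial>M)"
    by (rule integral_cong_AE) (use deltaR_ae_eq in \<open>auto simp: cexp_eq_real_cond_exp right_diff_distrib\<close>)
  also have "\<dots> = (\<integral>\<omega>. \<phi> \<omega> * real_cond_exp M F R1 \<omega> \<partial>M) - (\<integral>\<omega>. \<phi> \<omega> * real_cond_exp M F Rm1 \<omega> \<partial>M)"
    using \<phi>_int integrable_R1 integrable_Rm1 by (simp add: real_cond_exp_intg(1))
  also have "\<dots> = (\<integral>\<omega>. \<phi> \<omega> * R1 \<omega> \<partial>M) - (\<integral>\<omega>. \<phi> \<omega> * Rm1 \<omega> \<partial>M)"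
    using \<phi>_int integrable_R1 integrable_Rm1 by (simp add: real_cond_exp_intg(2))
  finally show ?thesis .
qed

lemma value_fun_eq_deltaR:
  assumes [measurable]: "D \<in> measurable N (count_space UNIV)"
    and D_values: "\<forall>\<omega>\<in>space M. D (Z \<omega>) \<in> {1, -1}"
  shows "value_fun M Z R1 Rm1 D
       = (\<integral>\<omega>. Rm1 \<omega> \<partial>M) + (\<integral>\<omega>. (if D (Z \<omega>) = 1 then 1 else 0) * deltaR M Z N A R \<omega> \<partial>M)"
proof -
  let ?I = "\<lambda>\<omega>. if D (Z \<omega>) = 1 then 1 else 0 :: real"
  have I_int: "integrable M (\<lambda>\<omega>. ?I \<omega> * Y \<omega>)" if "integrable M Y" for Y
    by (rule integrable_bounded_mult[OF that]) auto
  have "value_fun M Z R1 Rm1 D = (\<integral>\<omega>. Rm1 \<omega> + (?I \<omega> * R1 \<omega> - ?I \<omega> * Rm1 \<omega>) \<partial>M)"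
    unfolding value_fun_def by (rule Bochner_Integration.integral_cong) (use D_values in auto)
  also have "\<dots> = (\<integral>\<omega>. Rm1 \<omega> \<partial>M) + ((\<integral>\<omega>. ?I \<omega> * R1 \<omega> \<partial>M) - (\<integral>\<omega>. ?I \<omega> * Rm1 \<omega> \<partial>M))"
    using I_int integrable_R1 integrable_Rm1 by simp
  finally show ?thesis
    by (simp add: integral_mult_deltaR)
qed

end

lemma integral_psi_eq:
  assumes "finite_measure M"
    and [measurable]: "S \<in> measurable M (count_space UNIV)" "L \<in> measurable M (count_space UNIV)"
    and [measurable]: "{\<omega>\<in>space M. P \<omega>} \<in> sets M"
  shows "(\<integral>\<omega>. (if P \<omega> then 1 else 0) * (if L \<omega> = l then 1 else 0) * psi M S L l \<omega> \<partial>M)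
       = measure M {\<omega>\<in>space M. L \<omega> = l}
         * (cprob M {\<omega>\<in>space M. P \<omega>} {\<omega>\<in>space M. S \<omega> = 1 \<and> L \<omega> = l}
          - cprob M {\<omega>\<in>space M. P \<omega>} {\<omega>\<in>space M. S \<omega> = 0 \<and> L \<omega> = l})"
proof -
  \<comment> \<open>no positivity is needed: if \<open>pi_SL M S L s l = 0\<close>, both sides vanish since \<open>x / 0 = 0\<close>\<close>
  interpret finite_measure M by fact
  define E where "E = {\<omega>\<in>space M. P \<omega>}"
  define B where "B = {\<omega>\<in>space M. L \<omega> = l}"
  define C where "C s = {\<omega>\<in>space M. S \<omega> = s \<and> L \<omega> = l}" for s
  have [measurable]: "E \<in> sets M" "B \<in> sets M" "C s \<in> sets M" for s
    unfolding E_def B_def C_def by measurable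
  have pi_eq: "pi_SL M S L s l = measure M (C s) / measure M B" for s
  proof -
    have "{\<omega>\<in>space M. S \<omega> = s} \<inter> {\<omega>\<in>space M. L \<omega> = l} = C s" by (auto simp: C_def)
    then show ?thesis by (simp add: pi_SL_def cprob_def B_def)
  qed
  have "(\<integral>\<omega>. (if P \<omega> then 1 else 0) * (if L \<omega> = l then 1 else 0) * psi M S L l \<omega> \<partial>M)
      = (\<integral>\<omega>. indicator (E \<inter> C 1) \<omega> / pi_SL M S L 1 l - indicator (E \<inter> C 0) \<omega> / pi_SL M S L 0 l \<partial>M)"
    by (rule Bochner_Integration.integral_cong) (auto simp: psi_def E_def C_def indicator_def)
  also have "\<dots> = measure M (E \<inter> C 1) / pi_SL M S L 1 l - measure M (E \<inter> C 0) / pi_SL M S L 0 l"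
    by (subst Bochner_Integration.integral_diff)
       (auto simp: less_top[symmetric])
  also have "\<dots> = measure M B * (cprob M E (C 1) - cprob M E (C 0))"
    unfolding pi_eq cprob_def by (simp add: field_simps)
  finally show ?thesis unfolding E_def B_def C_def .
qed

lemma stratum_measure_pos:
  assumes "pi_SL M S L s l > 0"
  shows "measure M {\<omega>\<in>space M. S \<omega> = s \<and> L \<omega> = l} > 0" "measure M {\<omega>\<in>space M. L \<omega> = l} > 0"
proof -
  have "{\<omega>\<in>space M. S \<omega> = s} \<inter> {\<omega>\<in>space M. L \<omega> = l} = {\<omega>\<in>space M. S \<omega> = s \<and> L \<omega> = l}"
    by auto
  then have "pi_SL M S L s l = measure M {\<omega>\<in>space M. S \<omega> = s \<and> L \<omega> = l} / measure M {\<omega>\<in>space M. L \<omega> = l}"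
    by (simp add: pi_SL_def cprob_def)
  with assms show "measure M {\<omega>\<in>space M. S \<omega> = s \<and> L \<omega> = l} > 0" "measure M {\<omega>\<in>space M. L \<omega> = l} > 0"
    by (auto simp: zero_less_divide_iff measure_le_0_iff[symmetric] not_le)
qed

lemma constr_l_iff_cprob_eq:
  assumes "finite_measure M"
    and "S \<in> measurable M (count_space UNIV)" "L \<in> measurable M (count_space UNIV)"
    and "{\<omega>\<in>space M. f (Z \<omega>) > 0} \<in> sets M" and "measure M {\<omega>\<in>space M. L \<omega> = l} > 0"
  shows "constr_l M Z S L l f \<longleftrightarrow>
           cprob M {\<omega>\<in>space M. f (Z \<omega>) > 0} {\<omega>\<in>space M. S \<omega> = 1 \<and> L \<omega> = l}
         = cprob M {\<omega>\<in>space M. f (Z \<omega>) > 0} {\<omega>\<in>space M. S \<omega> = 0 \<and> L \<omega> = l}"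
  unfolding constr_l_def using integral_psi_eq[OF assms(1-4)] assms(5) by simp

lemma cdp_iff_cprob_eq:
  assumes "finite_measure M"
    and [measurable]: "S \<in> measurable M (count_space UNIV)" "L \<in> measurable M (count_space UNIV)"
    and [measurable]: "{\<omega>\<in>space M. D (Z \<omega>) = 1} \<in> sets M"
    and D_values: "\<forall>\<omega>\<in>space M. D (Z \<omega>) \<in> {1, -1}"
    and pi_pos: "\<forall>s\<in>{0, 1}. \<forall>l\<in>Ls. pi_SL M S L s l > 0"
  shows "cdp M Z S L Ls D \<longleftrightarrow>
           (\<forall>l\<in>Ls. cprob M {\<omega>\<in>space M. D (Z \<omega>) = 1} {\<omega>\<in>space M. S \<omega> = 1 \<and> L \<omega> = l}
                  = cprob M {\<omega>\<in>space M. D (Z \<omega>) = 1} {\<omega>\<in>space M. S \<omega> = 0 \<and> L \<omega> = l})"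
proof -
  interpret finite_measure M by fact
  let ?E = "\<lambda>a. {\<omega>\<in>space M. D (Z \<omega>) = a}"
  have compl: "cprob M (?E (-1)) C = 1 - cprob M (?E 1) C" if "C \<in> sets M" "measure M C > 0" for C
  proof -
    have "?E (-1) \<inter> C = C - ?E 1"
      using D_values sets.sets_into_space[OF \<open>C \<in> sets M\<close>] by auto
    then have "measure M (?E (-1) \<inter> C) = measure M C - measure M (?E 1 \<inter> C)"
      using that by (simp add: finite_measure_Diff' Int_commute)
    with that show ?thesis by (simp add: cprob_def field_simps)
  qed
  have [measurable]: "{\<omega>\<in>space M. S \<omega> = s \<and> L \<omega> = l} \<in> sets M" for s l by measurable
  have strata_pos: "measure M {\<omega>\<in>space M. S \<omega> = s \<and> L \<omega> = l} > 0" if "s \<in> {0, 1}" "l \<in> Ls" for s l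
    by (rule stratum_measure_pos(1)) (use pi_pos that in auto)
  show ?thesis
    unfolding cdp_def using compl strata_pos by auto
qed

lemma measurable_int_of_borel:
  fixes f :: "'a \<Rightarrow> int"
  assumes "(\<lambda>x. real_of_int (f x)) \<in> borel_measurable M"
  shows "f \<in> measurable M (count_space UNIV)"
  using measurable_compose[OF assms measurable_real_floor] by simp

lemma stratified_rule_measurable:
  fixes fs :: "'l \<Rightarrow> 'z \<Rightarrow> real" and strat :: "'z \<Rightarrow> 'l"
  assumes [measurable]: "\<And>l. l \<in> Ls \<Longrightarrow> fs l \<in> borel_measurable N" "strat \<in> measurable N (count_space UNIV)"
  shows "(\<lambda>z. \<Sum>l\<in>Ls. (2 * (if fs l z > 0 then 1 else 0) - 1) * (if strat z = l then 1 else (0::int)))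
      \<in> measurable N (count_space UNIV)"
  by (rule measurable_int_of_borel) simp

lemma stratified_rule_eq:
  fixes fs :: "'l \<Rightarrow> 'z \<Rightarrow> real"
  assumes "finite Ls" and "k \<in> Ls"
  shows "(\<Sum>l\<in>Ls. (2 * (if fs l z > 0 then 1 else 0) - 1) * (if k = l then 1 else (0::int)))
       = (if fs k z > 0 then 1 else -1)"
proof -
  have "(\<Sum>l\<in>Ls. (2 * (if fs l z > 0 then 1 else 0) - 1) * (if k = l then 1 else (0::int)))
      = (\<Sum>l\<in>Ls. if k = l then (if fs l z > 0 then 1 else -1) else 0)"
    by (rule sum.cong) auto
  with assms show ?thesis by simp
qed

lemma integral_sum_strata:
  fixes f :: "'a \<Rightarrow> real"
  assumes "finite Ls" and L_values: "\<forall>\<omega>\<in>space M. L \<omega> \<in> Ls"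
    and [measurable]: "L \<in> measurable M (count_space UNIV)" and f: "integrable M f"
  shows "(\<integral>\<omega>. f \<omega> \<partial>M) = (\<Sum>l\<in>Ls. \<integral>\<omega>. (if L \<omega> = l then 1 else 0) * f \<omega> \<partial>M)"
proof -
  have "(\<integral>\<omega>. f \<omega> \<partial>M) = (\<integral>\<omega>. (\<Sum>l\<in>Ls. (if L \<omega> = l then 1 else 0) * f \<omega>) \<partial>M)"
  proof (rule Bochner_Integration.integral_cong[OF refl])
    fix \<omega> assume "\<omega> \<in> space M"
    have "(\<Sum>l\<in>Ls. (if L \<omega> = l then 1 else 0) * f \<omega>) = (\<Sum>l\<in>Ls. if L \<omega> = l then f \<omega> else 0)"
      by (rule sum.cong) auto
    with \<open>\<omega> \<in> space M\<close> show "f \<omega> = (\<Sum>l\<in>Ls. (if L \<omega> = l then 1 else 0) * f \<omega>)"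
      using assms(1) L_values by simp
  qed
  also have "\<dots> = (\<Sum>l\<in>Ls. \<integral>\<omega>. (if L \<omega> = l then 1 else 0) * f \<omega> \<partial>M)"
    by (rule Bochner_Integration.integral_sum) (auto intro!: integrable_bounded_mult f)
  finally show ?thesis .
qed

lemma stratum_integral_le_of_optimal:
  fixes \<delta> :: "'a \<Rightarrow> real" and g h :: "'z \<Rightarrow> real" and strat :: "'z \<Rightarrow> 'l"
  assumes [measurable]: "Z \<in> measurable M N" "L \<in> measurable M (count_space UNIV)"
    and [measurable]: "strat \<in> measurable N (count_space UNIV)"
    and L_eq: "\<forall>\<omega>\<in>space M. L \<omega> = strat (Z \<omega>)"
    and \<delta>: "integrable M \<delta>"
    and [measurable]: "g \<in> borel_measurable N" "h \<in> borel_measurable N"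
    and h_feasible: "constr_l M Z S L l h"
    and g_optimal: "\<forall>f\<in>borel_measurable N. constr_l M Z S L l f \<longrightarrow> obj_l M Z \<delta> f \<le> obj_l M Z \<delta> g"
  shows "(\<integral>\<omega>. (if L \<omega> = l then 1 else 0) * ((if h (Z \<omega>) > 0 then 1 else 0) * \<delta> \<omega>) \<partial>M)
       \<le> (\<integral>\<omega>. (if L \<omega> = l then 1 else 0) * ((if g (Z \<omega>) > 0 then 1 else 0) * \<delta> \<omega>) \<partial>M)"
    (is "?H \<le> ?G")
proof -
  \<comment> \<open>\<open>p\<close> inherits feasibility from \<open>h\<close>, as the constraint only sees the stratum \<open>l\<close>\<close>
  define p where "p z = (if strat z = l then h z else g z)" for z
  have [measurable]: "p \<in> borel_measurable N" unfolding p_def by measurable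
  have "constr_l M Z S L l p"
    using h_feasible unfolding constr_l_def
    by (subst Bochner_Integration.integral_cong[OF refl]) (auto simp: p_def L_eq)
  then have "obj_l M Z \<delta> p \<le> obj_l M Z \<delta> g" using g_optimal by simp
  moreover have "obj_l M Z \<delta> p = ?H + (obj_l M Z \<delta> g - ?G)"
  proof -
    have "obj_l M Z \<delta> p = (\<integral>\<omega>. (if L \<omega> = l then 1 else 0) * ((if h (Z \<omega>) > 0 then 1 else 0) * \<delta> \<omega>)
        + ((if g (Z \<omega>) > 0 then 1 else 0) * \<delta> \<omega>
           - (if L \<omega> = l then 1 else 0) * ((if g (Z \<omega>) > 0 then 1 else 0) * \<delta> \<omega>)) \<partial>M)"
      unfolding obj_l_def by (rule Bochner_Integration.integral_cong) (auto simp: p_def L_eq)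
    then show ?thesis
      unfolding obj_l_def by (simp add: integrable_bounded_mult \<delta>)
  qed
  ultimately show ?thesis by simp
qed

lemma cdp_stratified_rule:
  fixes fs :: "'l \<Rightarrow> 'z \<Rightarrow> real"
  assumes M: "finite_measure M"
    and S[measurable]: "S \<in> measurable M (count_space UNIV)"
    and L[measurable]: "L \<in> measurable M (count_space UNIV)"
    and [measurable]: "Z \<in> measurable M N" "D \<in> measurable N (count_space UNIV)"
    and fs_measurable: "\<And>l. l \<in> Ls \<Longrightarrow> fs l \<in> borel_measurable N"
    and D_values: "\<forall>\<omega>\<in>space M. D (Z \<omega>) \<in> {1, -1}"
    and D_eq: "\<forall>\<omega>\<in>space M. D (Z \<omega>) = 1 \<longleftrightarrow> fs (L \<omega>) (Z \<omega>) > 0"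
    and pi_pos: "\<forall>s\<in>{0, 1}. \<forall>l\<in>Ls. pi_SL M S L s l > 0"
    and feasible: "\<forall>l\<in>Ls. constr_l M Z S L l (fs l)"
  shows "cdp M Z S L Ls D"
proof -
  let ?C = "\<lambda>s l. {\<omega>\<in>space M. S \<omega> = s \<and> L \<omega> = l}"
  let ?E = "{\<omega>\<in>space M. D (Z \<omega>) = 1}"
  have "cprob M ?E (?C 1 l) = cprob M ?E (?C 0 l)" if "l \<in> Ls" for l
  proof -
    have [measurable]: "fs l \<in> borel_measurable N" using fs_measurable that .
    have "?E \<inter> ?C s l = {\<omega>\<in>space M. fs l (Z \<omega>) > 0} \<inter> ?C s l" for s
      using D_eq by auto
    moreover have "measure M {\<omega>\<in>space M. L \<omega> = l} > 0"
      using stratum_measure_pos(2)[of M S L 1 l] pi_pos that by simp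
    then have "cprob M {\<omega>\<in>space M. fs l (Z \<omega>) > 0} (?C 1 l) = cprob M {\<omega>\<in>space M. fs l (Z \<omega>) > 0} (?C 0 l)"
      using constr_l_iff_cprob_eq[OF M S L, of "fs l" Z l] feasible that by simp
    ultimately show ?thesis by (simp add: cprob_def)
  qed
  moreover have "?E \<in> sets M" by measurable
  ultimately show ?thesis
    using cdp_iff_cprob_eq[where D = D and Z = Z, OF M S L _ D_values pi_pos] by simp
qed

lemma constr_l_of_cdp:
  assumes M: "finite_measure M"
    and S[measurable]: "S \<in> measurable M (count_space UNIV)"
    and L[measurable]: "L \<in> measurable M (count_space UNIV)"
    and [measurable]: "Z \<in> measurable M N" "D \<in> measurable N (count_space UNIV)"
    and D_values: "\<forall>\<omega>\<in>space M. D (Z \<omega>) \<in> {1, -1}"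
    and pi_pos: "\<forall>s\<in>{0, 1}. \<forall>l\<in>Ls. pi_SL M S L s l > 0"
    and "cdp M Z S L Ls D" and "l \<in> Ls"
  shows "constr_l M Z S L l (\<lambda>z. if D z = 1 then 1 else 0)"
proof -
  have E: "{\<omega>\<in>space M. D (Z \<omega>) = 1} \<in> sets M" by measurable
  have "{\<omega>\<in>space M. (0::real) < (if D (Z \<omega>) = 1 then 1 else 0)} = {\<omega>\<in>space M. D (Z \<omega>) = 1}"
    by auto
  moreover have "measure M {\<omega>\<in>space M. L \<omega> = l} > 0"
    using stratum_measure_pos(2)[of M S L 1 l] pi_pos \<open>l \<in> Ls\<close> by simp
  ultimately show ?thesis
    using \<open>cdp M Z S L Ls D\<close> \<open>l \<in> Ls\<close> E
      cdp_iff_cprob_eq[where D = D and Z = Z, OF M S L E D_values pi_pos]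
      constr_l_iff_cprob_eq[OF M S L, of "\<lambda>z. if D z = 1 then 1 else 0" Z l]
    by simp
qed

lemma (in causal_model) value_fun_le_of_stratum_optimal:
  fixes S :: "'a \<Rightarrow> nat" and L :: "'a \<Rightarrow> 'l" and strat :: "'z \<Rightarrow> 'l"
    and fs :: "'l \<Rightarrow> 'z \<Rightarrow> real" and D D' :: "'z \<Rightarrow> int"
  assumes L[measurable]: "L \<in> measurable M (count_space UNIV)"
    and strat[measurable]: "strat \<in> measurable N (count_space UNIV)"
    and L_eq: "\<forall>\<omega>\<in>space M. L \<omega> = strat (Z \<omega>)"
    and Ls: "finite Ls" "\<forall>\<omega>\<in>space M. L \<omega> \<in> Ls"
    and [measurable]: "D \<in> measurable N (count_space UNIV)" "D' \<in> measurable N (count_space UNIV)"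
    and D_values: "\<forall>\<omega>\<in>space M. D (Z \<omega>) \<in> {1, -1}"
    and D'_values: "\<forall>\<omega>\<in>space M. D' (Z \<omega>) \<in> {1, -1}"
    and D_feasible: "\<forall>l\<in>Ls. constr_l M Z S L l (\<lambda>z. if D z = 1 then 1 else 0)"
    and D'_eq: "\<forall>\<omega>\<in>space M. D' (Z \<omega>) = 1 \<longleftrightarrow> fs (L \<omega>) (Z \<omega>) > 0"
    and fs_measurable: "\<forall>l\<in>Ls. fs l \<in> borel_measurable N"
    and fs_optimal: "\<forall>l\<in>Ls. \<forall>f\<in>borel_measurable N. constr_l M Z S L l f \<longrightarrow>
                       obj_l M Z (deltaR M Z N A R) f \<le> obj_l M Z (deltaR M Z N A R) (fs l)"
  shows "value_fun M Z R1 Rm1 D \<le> value_fun M Z R1 Rm1 D'"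
proof -
  let ?\<delta> = "deltaR M Z N A R"
  let ?IL = "\<lambda>l \<omega>. if L \<omega> = l then 1 else 0 :: real"
  have "(\<integral>\<omega>. ?IL l \<omega> * ((if D (Z \<omega>) = 1 then 1 else 0) * ?\<delta> \<omega>) \<partial>M)
      \<le> (\<integral>\<omega>. ?IL l \<omega> * ((if D' (Z \<omega>) = 1 then 1 else 0) * ?\<delta> \<omega>) \<partial>M)" if "l \<in> Ls" for l
  proof -
    let ?h = "\<lambda>z. if D z = 1 then 1 else 0 :: real"
    have "(\<integral>\<omega>. ?IL l \<omega> * ((if D (Z \<omega>) = 1 then 1 else 0) * ?\<delta> \<omega>) \<partial>M)
        = (\<integral>\<omega>. ?IL l \<omega> * ((if ?h (Z \<omega>) > 0 then 1 else 0) * ?\<delta> \<omega>) \<partial>M)"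
      by (rule Bochner_Integration.integral_cong) auto
    also have "\<dots> \<le> (\<integral>\<omega>. ?IL l \<omega> * ((if fs l (Z \<omega>) > 0 then 1 else 0) * ?\<delta> \<omega>) \<partial>M)"
      using that fs_measurable D_feasible fs_optimal
      by (intro stratum_integral_le_of_optimal[where S = S, OF Z_measurable L strat L_eq integrable_deltaR]) simp_all
    also have "\<dots> = (\<integral>\<omega>. ?IL l \<omega> * ((if D' (Z \<omega>) = 1 then 1 else 0) * ?\<delta> \<omega>) \<partial>M)"
      by (rule Bochner_Integration.integral_cong) (auto simp: D'_eq)
    finally show ?thesis .
  qed
  then have "(\<Sum>l\<in>Ls. \<integral>\<omega>. ?IL l \<omega> * ((if D (Z \<omega>) = 1 then 1 else 0) * ?\<delta> \<omega>) \<partial>M)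
           \<le> (\<Sum>l\<in>Ls. \<integral>\<omega>. ?IL l \<omega> * ((if D' (Z \<omega>) = 1 then 1 else 0) * ?\<delta> \<omega>) \<partial>M)"
    by (rule sum_mono)
  moreover have "integrable M (\<lambda>\<omega>. (if D (Z \<omega>) = 1 then 1 else 0) * ?\<delta> \<omega>)"
    and "integrable M (\<lambda>\<omega>. (if D' (Z \<omega>) = 1 then 1 else 0) * ?\<delta> \<omega>)"
    by (rule integrable_bounded_mult[OF integrable_deltaR], simp, simp)+
  ultimately have "(\<integral>\<omega>. (if D (Z \<omega>) = 1 then 1 else 0) * ?\<delta> \<omega> \<partial>M)
                 \<le> (\<integral>\<omega>. (if D' (Z \<omega>) = 1 then 1 else 0) * ?\<delta> \<omega> \<partial>M)"
    by (simp only: integral_sum_strata[OF Ls L])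
  then show ?thesis
    using value_fun_eq_deltaR D_values D'_values by simp
qed

theorem proposition1:
  fixes M :: "'a measure"
    and X :: "'a \<Rightarrow> real ^ 'p"
    and S :: "'a \<Rightarrow> nat"
    and L :: "'a \<Rightarrow> 'l"
    and Ls :: "'l set"
    and A :: "'a \<Rightarrow> int"
    and R R1 Rm1 :: "'a \<Rightarrow> real"
    and fs :: "'l \<Rightarrow> ((real ^ 'p) \<times> nat \<times> 'l) \<Rightarrow> real"
  defines "NZ \<equiv> (borel :: (real ^ 'p) measure) \<Otimes>\<^sub>M ((count_space UNIV :: nat measure) \<Otimes>\<^sub>M (count_space UNIV :: 'l measure))"
    and "Z \<equiv> (\<lambda>\<omega>. (X \<omega>, S \<omega>, L \<omega>))"
    and "Dstar \<equiv> (\<lambda>z. \<Sum>l\<in>Ls. (2 * (if fs l z > 0 then 1 else 0) - 1) * (if snd (snd z) = l then 1 else (0::int)))"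
  assumes prob: "prob_space M"
    and X_meas: "X \<in> borel_measurable M"
    and S_meas: "S \<in> measurable M (count_space UNIV)"
    and L_meas: "L \<in> measurable M (count_space UNIV)"
    and A_meas: "A \<in> measurable M (count_space UNIV)"
    and R1_int: "integrable M R1"
    and Rm1_int: "integrable M Rm1"
    and S_vals: "\<forall>\<omega>\<in>space M. S \<omega> \<in> {0, 1}"
    and Ls_fin: "finite Ls"
    and L_vals: "\<forall>\<omega>\<in>space M. L \<omega> \<in> Ls"
    and A_vals: "\<forall>\<omega>\<in>space M. A \<omega> \<in> {1, -1}"
    and SUTVA: "\<forall>\<omega>\<in>space M. R \<omega> = (if A \<omega> = 1 then R1 \<omega> else Rm1 \<omega>)"
    and NUC: "cond_indep_given M Z NZ (\<lambda>\<omega>. (Rm1 \<omega>, R1 \<omega>)) borel A (count_space UNIV)"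
    and propensity: "AE \<omega> in M. 0 < cexp M Z NZ (\<lambda>\<omega>. if A \<omega> = 1 then 1 else 0) \<omega>
                          \<and> cexp M Z NZ (\<lambda>\<omega>. if A \<omega> = 1 then 1 else 0) \<omega> < 1"
    and pos_SL: "\<forall>s\<in>{0,1}. \<forall>l\<in>Ls. pi_SL M S L s l > 0"
    and fs_meas: "\<forall>l\<in>Ls. fs l \<in> borel_measurable NZ"
    and fs_feas: "\<forall>l\<in>Ls. constr_l M Z S L l (fs l)"
    and fs_opt: "\<forall>l\<in>Ls. \<forall>f \<in> borel_measurable NZ. constr_l M Z S L l f \<longrightarrow>
                    obj_l M Z (deltaR M Z NZ A R) f \<le> obj_l M Z (deltaR M Z NZ A R) (fs l)"
  shows "Dstar \<in> measurable NZ (count_space UNIV)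
    \<and> (\<forall>\<omega>\<in>space M. Dstar (Z \<omega>) \<in> {1, -1})
    \<and> cdp M Z S L Ls Dstar
    \<and> (\<forall>D \<in> measurable NZ (count_space UNIV). (\<forall>z\<in>space NZ. D z \<in> {1, -1}) \<longrightarrow> cdp M Z S L Ls D \<longrightarrow>
          value_fun M Z R1 Rm1 D \<le> value_fun M Z R1 Rm1 Dstar)"
proof -
  interpret prob_space M by (rule prob)
  note [measurable] = X_meas S_meas L_meas A_meas
  have Z_meas[measurable]: "Z \<in> measurable M NZ" unfolding Z_def NZ_def by measurable
  interpret causal_model M Z NZ A R R1 Rm1
    by unfold_locales (use Z_meas A_vals R1_int Rm1_int SUTVA NUC propensity in auto)
  have strat[measurable]: "(\<lambda>z. snd (snd z)) \<in> measurable NZ (count_space UNIV)"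
    unfolding NZ_def by measurable
  have Dstar_Z: "Dstar (Z \<omega>) = (if fs (L \<omega>) (Z \<omega>) > 0 then 1 else -1)" if "\<omega> \<in> space M" for \<omega>
  proof -
    have "L \<omega> \<in> Ls" using L_vals that by blast
    then show ?thesis
      unfolding Dstar_def using stratified_rule_eq[OF Ls_fin, of "L \<omega>" fs "Z \<omega>"] by (simp add: Z_def)
  qed
  have Dstar_meas[measurable]: "Dstar \<in> measurable NZ (count_space UNIV)"
    unfolding Dstar_def by (rule stratified_rule_measurable) (use fs_meas strat in auto)
  have Dstar_vals: "\<forall>\<omega>\<in>space M. Dstar (Z \<omega>) \<in> {1, -1}" and Dstar_eq: "\<forall>\<omega>\<in>space M. Dstar (Z \<omega>) = 1 \<longleftrightarrow> fs (L \<omega>) (Z \<omega>) > 0"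
    using Dstar_Z by auto
  have cdp_Dstar: "cdp M Z S L Ls Dstar"
    by (rule cdp_stratified_rule[OF finite_measure_axioms S_meas L_meas Z_meas Dstar_meas _ Dstar_vals Dstar_eq pos_SL fs_feas])
       (use fs_meas in auto)
  have "value_fun M Z R1 Rm1 D \<le> value_fun M Z R1 Rm1 Dstar"
    if [measurable]: "D \<in> measurable NZ (count_space UNIV)" and "\<forall>z\<in>space NZ. D z \<in> {1, -1}"
      and "cdp M Z S L Ls D" for D
  proof (rule value_fun_le_of_stratum_optimal[OF L_meas strat _ Ls_fin L_vals that(1) Dstar_meas _ Dstar_vals _ Dstar_eq fs_meas fs_opt])
    show "\<forall>\<omega>\<in>space M. D (Z \<omega>) \<in> {1, -1}" using that(2) measurable_space[OF Z_meas] by auto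
    then show "\<forall>l\<in>Ls. constr_l M Z S L l (\<lambda>z. if D z = 1 then 1 else 0)"
      using constr_l_of_cdp[OF finite_measure_axioms S_meas L_meas Z_meas that(1) _ pos_SL that(3)] by auto
  qed (simp add: Z_def)
  then show ?thesis using Dstar_meas Dstar_vals cdp_Dstar by blast
qed

end
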